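(* Let $L$ be a commutative language with the linear property over $\Sigma=\{a_1,\dots,a_k\}$, with constant $\vec{c}$ and periods $\mathcal{P}=\{\vec{p}^{(1)},\dots,\vec{p}^{(q)}\}$, $q>0$, where every component of every period is even. Then for all even integers $m\ge 4$ and every $R=\{r\}$ with $1\le r\le m/2-1$, the decomposed base $D=X\cup(Y\lhd W)$ built from these data as described below satisfies $L=\mathcal{C}(D)$.
   Context: Notation: $\Sigma$ is the terminal alphabet, $\mathring\Sigma$ its dotted copy, $\widetilde\Sigma=\Sigma\cup\mathring\Sigma$, $\widetilde a=\{a,\mathring a\}$. $\Psi$ is the Parikh image, $\pi_\Delta$ is projection onto $\Delta$, and $\sqcup\!\sqcup$ denotes the shuffle operation. The match $@$ on letters is $a@\mathring a=\mathring a@a=a$, $\mathring a@\mathring a=\mathring a$, undefined otherwise; it extends letter-by-letter to equal-length words and to languages. $B^{@}$ is the closure of $B$ under match, and $\mathcal{C}(B)=B^{@}\cap\Sigma^*$. $\mathit{switch}$ exchanges $a$ and $\mathring a$. A language with the linear property has Parikh image $\{\vec c+n_1\vec p^{(1)}+\dots+n_q\vec p^{(q)}\mid n_i\ge0\}$; it is commutative if membership depends only on the Parikh image. For the module $m$ and set of slots $R$, let $R_m(a)=\{\mathring a\, a^{r-1}\mathring a\, a^{m-r-1}\mid r\in R\}$. The scaffold set is $sc(R)_m=\{x\mid\forall a\in\Sigma,\ \pi_{\widetilde a}(x)\in(R_m(a)\cup a)^*\}$, and the fill set is $fl(R)_m=\mathit{switch}(sc(R)_m)-\mathring\Sigma^*$.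 Appending: for $A\subseteq a^+$, factor $B=B_{\widetilde a}\cdot B_{\widetilde\Sigma-\widetilde a}$, where $B_{\widetilde a}\subseteq\widetilde\Sigma^*\widetilde a$ and $B_{\widetilde\Sigma-\widetilde a}\subseteq(\widetilde\Sigma-\widetilde a)^*$. Then $B\lhd A=B_{\widetilde a}\cdot(B_{\widetilde\Sigma-\widetilde a}\,\sqcup\!\sqcup\,A)$. For a commutative $F$, $B\lhd F$ applies $\lhd\pi_{a_i}(F)$ successively for all $i$. The sets are defined as follows: - $X=\bigcup_{\vec p\in\mathcal P}\{x\in fl(R)_m\mid\Psi(\pi_\Sigma(x))=\vec p\}$; - $Y=(R_m(a_1))^*\,\sqcup\!\sqcup\,\cdots\,\sqcup\!\sqcup\,(R_m(a_k))^*$; - $W$ is the finite commutative language with $\Psi(W)=\{\vec c+h_1\vec p^{(1)}+\dots+h_q\vec p^{(q)}\mid 0\le h_i<m/2\}$; - $D=X\cup(Y\lhd W)$, which is decomposed with scaffold $Y\lhd W$ and fill $X$. *)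

theory Defs
  imports Main
begin

text \<open>Letters of the extended alphabet: undotted letters U a (in Sigma) and
  dotted letters Dt a (in the dotted copy).  The alphabet Sigma is the finite
  enumerated type 'a, with a_1,...,a_k given by Enum.enum.\<close>
datatype 'a tl = U 'a | Dt 'a

fun base :: "'a tl \<Rightarrow> 'a" where
  "base (U a) = a" | "base (Dt a) = a"

fun switch1 :: "'a tl \<Rightarrow> 'a tl" where
  "switch1 (U a) = Dt a" | "switch1 (Dt a) = U a"

definition switch :: "'a tl list set \<Rightarrow> 'a tl list set" where
  "switch B = map switch1 ` B"

fun lmatch :: "'a tl \<Rightarrow> 'a tl \<Rightarrow> 'a tl option" where
  "lmatch (U a) (Dt b) = (if a = b then Some (U a) else None)"
| "lmatch (Dt a) (U b) = (if a = b then Some (U a) else None)"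
| "lmatch (Dt a) (Dt b) = (if a = b then Some (Dt a) else None)"
| "lmatch (U a) (U b) = None"

definition wmatch :: "'a tl list \<Rightarrow> 'a tl list \<Rightarrow> 'a tl list option" where
  "wmatch x y =
     (if length x = length y \<and> (\<forall>(s, t) \<in> set (zip x y). lmatch s t \<noteq> None)
      then Some (map (\<lambda>(s, t). the (lmatch s t)) (zip x y)) else None)"

inductive_set match_closure :: "'a tl list set \<Rightarrow> 'a tl list set" for B where
  mc_base: "x \<in> B \<Longrightarrow> x \<in> match_closure B"
| mc_step: "x \<in> match_closure B \<Longrightarrow> y \<in> match_closure B \<Longrightarrow> wmatch x y = Some z
            \<Longrightarrow> z \<in> match_closure B"

text \<open>C(B) = B^@ \<inter> Sigma^*, with Sigma^* identified with 'a list.\<close>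
definition C :: "'a tl list set \<Rightarrow> 'a list set" where
  "C B = {w. map U w \<in> match_closure B}"

definition parikh :: "'a list \<Rightarrow> 'a \<Rightarrow> nat" where
  "parikh w = (\<lambda>a. count_list w a)"

definition proj_undotted :: "'a tl list \<Rightarrow> 'a list" where
  "proj_undotted x = concat (map (\<lambda>t. case t of U a \<Rightarrow> [a] | Dt _ \<Rightarrow> []) x)"

definition proj_tilde :: "'a \<Rightarrow> 'a tl list \<Rightarrow> 'a tl list" where
  "proj_tilde a x = filter (\<lambda>t. base t = a) x"

definition kstar :: "'b list set \<Rightarrow> 'b list set" where
  "kstar A = {concat ws | ws. set ws \<subseteq> A}"

definition Rm :: "nat \<Rightarrow> nat set \<Rightarrow> 'a \<Rightarrow> 'a tl list set" where
  "Rm m R a = {[Dt a] @ replicate (r - 1) (U a) @ [Dt a] @ replicate (m - r - 1) (U a) | r. r \<in> R}"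

definition sc :: "nat \<Rightarrow> nat set \<Rightarrow> 'a tl list set" where
  "sc m R = {x. \<forall>a. proj_tilde a x \<in> kstar (Rm m R a \<union> {[U a]})}"

definition fl :: "nat \<Rightarrow> nat set \<Rightarrow> 'a tl list set" where
  "fl m R = switch (sc m R) - lists (range Dt)"

definition shuffle_lang :: "'b list set \<Rightarrow> 'b list set \<Rightarrow> 'b list set" where
  "shuffle_lang A B = \<Union> {shuffles x y | x y. x \<in> A \<and> y \<in> B}"

definition Yset :: "nat \<Rightarrow> nat set \<Rightarrow> ('a::enum) tl list set" where
  "Yset m R = foldr (\<lambda>a acc. shuffle_lang (kstar (Rm m R a)) acc) Enum.enum {[]}"

text \<open>Factorisation w = u v with u empty or ending in a letter of {a, dotted a},
  and v free of such letters.\<close>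
definition split_last :: "'a \<Rightarrow> 'a tl list \<Rightarrow> 'a tl list \<times> 'a tl list" where
  "split_last a w = (let v = rev (takeWhile (\<lambda>t. base t \<noteq> a) (rev w))
                     in (take (length w - length v) w, v))"

text \<open>B \<lhd> A for A a language of a-words.\<close>
definition append_lang :: "'a tl list set \<Rightarrow> 'a \<Rightarrow> 'a tl list set \<Rightarrow> 'a tl list set" where
  "append_lang B a A =
     {fst (split_last a w) @ z | w x z. w \<in> B \<and> x \<in> A \<and> z \<in> shuffles (snd (split_last a w)) x}"

text \<open>B \<lhd> F for commutative F: for each word f of F, append successively
  pi_{a_1}(f), ..., pi_{a_k}(f).\<close>
definition append_comm :: "('a::enum) tl list set \<Rightarrow> 'a list set \<Rightarrow> 'a tl list set" where
  "append_comm B F =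
     (\<Union>f\<in>F. foldl (\<lambda>B' a. append_lang B' a {map U (filter (\<lambda>b. b = a) f)}) B Enum.enum)"

definition linset :: "('a \<Rightarrow> nat) \<Rightarrow> ('a \<Rightarrow> nat) set \<Rightarrow> ('a \<Rightarrow> nat) set" where
  "linset c P = {v. \<exists>n. v = (\<lambda>a. c a + (\<Sum>p\<in>P. n p * p a))}"

definition commutative_lang :: "'a list set \<Rightarrow> bool" where
  "commutative_lang L = (\<forall>u v. parikh u = parikh v \<longrightarrow> (u \<in> L \<longleftrightarrow> v \<in> L))"

definition Wlang :: "('a \<Rightarrow> nat) \<Rightarrow> ('a \<Rightarrow> nat) set \<Rightarrow> nat \<Rightarrow> 'a list set" where
  "Wlang c P m = {w. \<exists>h. (\<forall>p\<in>P. 2 * h p < m) \<and> parikh w = (\<lambda>a. c a + (\<Sum>p\<in>P. h p * p a))}"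

definition Xset :: "('a \<Rightarrow> nat) \<Rightarrow> ('a \<Rightarrow> nat) set \<Rightarrow> nat \<Rightarrow> nat set \<Rightarrow> 'a tl list set" where
  "Xset c P m R = (\<Union>p\<in>P. {x \<in> fl m R. parikh (proj_undotted x) = p})"

definition Dset :: "('a::enum \<Rightarrow> nat) \<Rightarrow> ('a \<Rightarrow> nat) set \<Rightarrow> nat \<Rightarrow> nat set \<Rightarrow> 'a tl list set" where
  "Dset c P m R = Xset c P m R \<union> append_comm (Yset m R) (Wlang c P m)"

end

theory Submission
  imports Defs
begin

text \<open>
  Every word of the match closure of D is fill-like or scaffold-like. A fill-like word ends in a
  dotted letter and its undotted letters have Parikh vector in the span of the periods. In a
  scaffold-like word the a-projection has length m k_a + c_a + \<Sum> h_p p_a, with 2 k_a dotted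
  letters up to multiples of periods, and its m-th letter is undotted. Matching preserves this:
  fills combine to fills, a fill and a scaffold give a scaffold, and two nonempty scaffolds never
  match since they are both undotted at the same position. A word over \<Sigma> is not fill-like,
  so it is scaffold-like without dots, whence 2 k = \<Sum> n_p p and its Parikh vector is
  c + \<Sum> (h_p + n_p m/2) p.

  Conversely write the coefficients of a vector of the linear set as n_p = h_p + (m/2) g_p with
  h_p < m/2. Dotting w as \<Sum> g_p p_a/2 blocks of each letter a followed by a tail of Parikh
  vector c + \<Sum> h_p p gives a word of Y \<lhd> W. Matching it successively with fill words,
  each of which undots p_a/2 blocks of every letter (this needs p even), removes all dots.
\<close>

lemma proj_tilde_simps [simp]:
  "proj_tilde a [] = []"
  "proj_tilde a (t # x) = (if base t = a then t # proj_tilde a x else proj_tilde a x)"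
  "proj_tilde a (x @ y) = proj_tilde a x @ proj_tilde a y"
  by (simp_all add: proj_tilde_def)

lemma proj_tilde_in_lists: "proj_tilde a x \<in> lists {t. base t = a}"
  by (auto simp: proj_tilde_def)

lemma proj_tilde_filter_other:
  "proj_tilde b (filter (\<lambda>t. base t \<noteq> a) z) = (if b = a then [] else proj_tilde b z)"
  by (induction z) auto

lemma proj_tilde_letter_word:
  "x \<in> lists {t. base t = a} \<Longrightarrow> proj_tilde b x = (if b = a then x else [])"
  by (induction x) (auto simp: proj_tilde_def)

lemma count_U_proj_tilde: "count_list (proj_tilde a z) (U a) = count_list z (U a)"
  by (induction z) (auto simp: proj_tilde_def)

lemma count_proj_undotted: "count_list (proj_undotted x) a = count_list x (U a)"
  by (induction x) (auto simp: proj_undotted_def split: tl.splits)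

lemma proj_tilde_all_Nil: "(\<And>a. proj_tilde a y = []) \<Longrightarrow> y = []"
  by (cases y) (auto simp: proj_tilde_def dest: meta_spec[of _ "base (hd y)"])

lemma proj_tilde_shuffles:
  "z \<in> shuffles x y \<Longrightarrow> proj_tilde a z \<in> shuffles (proj_tilde a x) (proj_tilde a y)"
  unfolding proj_tilde_def using filter_shuffles by blast

lemma exists_word_with_projections:
  assumes "\<And>a. V a \<in> lists {t. base t = a}"
  shows "\<exists>y :: ('a::enum) tl list. \<forall>a. proj_tilde a y = V a"
proof -
  have proj_V: "proj_tilde a (V b) = (if a = b then V b else [])" for a b
    by (rule proj_tilde_letter_word[OF assms])
  have "proj_tilde a (concat (map V as)) = (if a \<in> set as then V a else [])" if "distinct as" for a as
    using that by (induction as) (auto simp: proj_V)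
  then show ?thesis
    by (intro exI[of _ "concat (map V Enum.enum)"]) (simp add: enum_distinct enum_UNIV)
qed

lemma count_list_replicate: "count_list (replicate n x) y = (if x = y then n else 0)"
  by (induction n) auto

lemma count_list_concat_replicate: "count_list (concat (replicate k xs)) y = k * count_list xs y"
  by (induction k) (auto simp: count_list_append)

lemma exists_word_with_counts: "\<exists>f :: ('a::enum) list. \<forall>a. count_list f a = e a"
proof -
  have "count_list (concat (map (\<lambda>b. replicate (e b) b) as)) a = (if a \<in> set as then e a else 0)"
    if "distinct as" for as a
    using that by (induction as) (auto simp: count_list_append count_list_replicate)
  then show ?thesis
    by (intro exI[of _ "concat (map (\<lambda>b. replicate (e b) b) Enum.enum)"])
      (simp add: enum_distinct enum_UNIV)
qed

lemma map_U_filter_eq: "map U (filter (\<lambda>b. b = a) f) = replicate (count_list f a) (U a)"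
  by (induction f) auto

lemma kstar_lists: "A \<subseteq> lists S \<Longrightarrow> kstar A \<subseteq> lists S"
  by (force simp: kstar_def)

lemma kstar_append: "x \<in> kstar A \<Longrightarrow> y \<in> kstar A \<Longrightarrow> x @ y \<in> kstar A"
  unfolding kstar_def by clarsimp (metis concat_append le_sup_iff set_append)

lemma kstar_concat_replicate: "x \<in> A \<Longrightarrow> concat (replicate k x) \<in> kstar A"
  unfolding kstar_def by (auto intro!: exI[of _ "replicate k x"])

lemma kstar_singleton: "kstar {x} = range (\<lambda>k. concat (replicate k x))"
proof -
  have "set ws \<subseteq> {x} \<Longrightarrow> ws = replicate (length ws) x" for ws
    by (induction ws) auto
  then show ?thesis unfolding kstar_def by (auto intro!: exI[of _ "replicate _ x"]) (metis rangeI)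
qed

lemma kstar_map: "x \<in> kstar A \<Longrightarrow> map f x \<in> kstar (map f ` A)"
  unfolding kstar_def by (fastforce simp: map_concat)

lemma kstar_last: "x \<in> kstar A \<Longrightarrow> x \<noteq> [] \<Longrightarrow> \<exists>v\<in>A. v \<noteq> [] \<and> last x = last v"
proof -
  have "concat ws \<noteq> [] \<Longrightarrow> \<exists>v\<in>set ws. v \<noteq> [] \<and> last (concat ws) = last v" for ws :: "'b list list"
    by (induction ws) (auto simp: last_append)
  then show "x \<in> kstar A \<Longrightarrow> x \<noteq> [] \<Longrightarrow> \<exists>v\<in>A. v \<noteq> [] \<and> last x = last v"
    unfolding kstar_def by blast
qed

section \<open>Matching words\<close>

lemma lmatch_commute: "lmatch s t = lmatch t s"
  by (cases s; cases t) auto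

lemma lmatch_U_right: "lmatch s (U a) = Some u \<Longrightarrow> u = U a"
  by (cases s) (auto split: if_splits)

lemma wmatch_Nil [simp]:
  "wmatch [] [] = Some []" "wmatch [] (t # y) = None" "wmatch (s # x) [] = None"
  by (simp_all add: wmatch_def)

lemma wmatch_Cons [simp]:
  "wmatch (s # x) (t # y) =
     (case lmatch s t of None \<Rightarrow> None | Some u \<Rightarrow> map_option ((#) u) (wmatch x y))"
  by (cases "lmatch s t") (auto simp: wmatch_def)

lemma wmatch_commute: "wmatch x y = wmatch y x"
proof (induction x arbitrary: y)
  case Nil
  then show ?case by (cases y) auto
next
  case (Cons s x)
  then show ?case by (cases y) (auto simp: lmatch_commute split: option.splits)
qed

lemma wmatch_SomeE:
  assumes "wmatch (s # x) y = Some z"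
  obtains t y' u z' where "y = t # y'" "z = u # z'" "lmatch s t = Some u" "wmatch x y' = Some z'"
  using assms by (cases y) (auto split: option.splits)

lemma wmatch_nth:
  assumes "wmatch x y = Some z"
  shows "length y = length x" "length z = length x"
    "\<And>i. i < length x \<Longrightarrow> lmatch (x ! i) (y ! i) = Some (z ! i)"
  using assms
proof (induction x arbitrary: y z)
  case Nil
  { case 1 then show ?case by (cases y) auto }
  { case 2 then show ?case by (cases y) auto }
  { case 3 then show ?case by simp }
next
  case (Cons s x)
  { case 1 then show ?case by (auto elim!: wmatch_SomeE dest: Cons.IH(1)) }
  { case 2 then show ?case by (auto elim!: wmatch_SomeE dest: Cons.IH(2)) }
  { case (3 i) then show ?case
    by (auto elim!: wmatch_SomeE dest: Cons.IH(3) simp: nth_Cons split: nat.splits) }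
qed

lemma wmatch_last:
  "wmatch x y = Some z \<Longrightarrow> x \<noteq> [] \<Longrightarrow> lmatch (last x) (last y) = Some (last z)"
proof -
  assume "wmatch x y = Some z" "x \<noteq> []"
  with wmatch_nth[of x y z] show ?thesis
    by (metis diff_less last_conv_nth length_greater_0_conv zero_less_one)
qed

lemma wmatch_keeps_U:
  "wmatch x y = Some z \<Longrightarrow> i < length y \<Longrightarrow> y ! i = U a \<Longrightarrow> z ! i = U a"
  using wmatch_nth[of x y z] lmatch_U_right by metis

lemma wmatch_count_U:
  "wmatch x y = Some z \<Longrightarrow> count_list z (U a) = count_list x (U a) + count_list y (U a)"
proof (induction x arbitrary: y z)
  case Nil
  then show ?case by (cases y) auto
next
  case (Cons s x)
  from Cons.prems show ?case
    by (elim wmatch_SomeE) (auto dest!: Cons.IH elim!: lmatch.elims split: if_splits)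
qed

lemma wmatch_proj_tilde:
  "wmatch x y = Some z \<Longrightarrow> wmatch (proj_tilde a x) (proj_tilde a y) = Some (proj_tilde a z)"
proof (induction x arbitrary: y z)
  case Nil
  then show ?case by (cases y) (auto simp: proj_tilde_def)
next
  case (Cons s x)
  from Cons.prems show ?case
    by (elim wmatch_SomeE)
      (auto dest!: Cons.IH simp: proj_tilde_def elim!: lmatch.elims split: if_splits)
qed

section \<open>Membership in Y and in appended languages\<close>

lemma foldr_shuffle_lang_iff:
  assumes "distinct as" and "\<And>a. Lang a \<subseteq> lists {t. base t = a}"
  shows "y \<in> foldr (\<lambda>a acc. shuffle_lang (Lang a) acc) as {[]} \<longleftrightarrow>
    (\<forall>a. proj_tilde a y \<in> (if a \<in> set as then Lang a else {[]}))"
  using assms(1)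
proof (induction as arbitrary: y)
  case Nil
  show ?case using proj_tilde_all_Nil[of y] by auto
next
  case (Cons a0 as)
  let ?F = "foldr (\<lambda>a acc. shuffle_lang (Lang a) acc) as {[]}"
  have proj_Lang: "x \<in> Lang a0 \<Longrightarrow> proj_tilde a x = (if a = a0 then x else [])" for x a
    using assms(2) by (intro proj_tilde_letter_word) auto
  show ?case
  proof
    assume "y \<in> foldr (\<lambda>a acc. shuffle_lang (Lang a) acc) (a0 # as) {[]}"
    then obtain x y' where x: "x \<in> Lang a0" and y': "y' \<in> ?F" and y: "y \<in> shuffles x y'"
      by (auto simp: shuffle_lang_def)
    have IH: "proj_tilde a y' \<in> (if a \<in> set as then Lang a else {[]})" for a
      using Cons.IH Cons.prems y' by (meson distinct.simps(2))
    show "\<forall>a. proj_tilde a y \<in> (if a \<in> set (a0 # as) then Lang a else {[]})"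
    proof
      fix a
      have "proj_tilde a y \<in> shuffles (proj_tilde a x) (proj_tilde a y')"
        by (rule proj_tilde_shuffles[OF y])
      moreover have "a = a0 \<Longrightarrow> proj_tilde a y' = []"
        using IH[of a] Cons.prems by simp
      ultimately show "proj_tilde a y \<in> (if a \<in> set (a0 # as) then Lang a else {[]})"
        using IH[of a] x by (cases "a = a0") (simp_all add: proj_Lang[OF x])
    qed
  next
    assume y: "\<forall>a. proj_tilde a y \<in> (if a \<in> set (a0 # as) then Lang a else {[]})"
    let ?y' = "filter (\<lambda>t. base t \<noteq> a0) y"
    have "proj_tilde a ?y' \<in> (if a \<in> set as then Lang a else {[]})" for a
      using y[rule_format, of a] Cons.prems by (auto simp: proj_tilde_filter_other)
    then have "?y' \<in> ?F"
      using Cons.IH[of ?y'] Cons.prems by simp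
    moreover have "y \<in> shuffles (proj_tilde a0 y) ?y'"
      using partition_in_shuffles[of y "\<lambda>t. base t = a0"] by (simp add: proj_tilde_def)
    moreover have "proj_tilde a0 y \<in> Lang a0"
      using y[rule_format, of a0] by simp
    ultimately show "y \<in> foldr (\<lambda>a acc. shuffle_lang (Lang a) acc) (a0 # as) {[]}"
      by (auto simp: shuffle_lang_def)
  qed
qed

lemma Rm_letter_words: "Rm m R a \<subseteq> lists {t. base t = a}"
  by (auto simp: Rm_def)

lemma Yset_iff: "y \<in> Yset m R \<longleftrightarrow> (\<forall>a. proj_tilde a y \<in> kstar (Rm m R a))"
proof -
  have letter_words: "kstar (Rm m R a) \<subseteq> lists {t. base t = a}" for a
    by (intro kstar_lists Rm_letter_words)
  show ?thesis
    unfolding Yset_def by (simp add: foldr_shuffle_lang_iff[OF enum_distinct letter_words] enum_UNIV)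
qed

definition proj_closed :: "'a tl list set \<Rightarrow> bool" where
  "proj_closed B \<longleftrightarrow> (\<forall>x y. x \<in> B \<longrightarrow> (\<forall>a. proj_tilde a y = proj_tilde a x) \<longrightarrow> y \<in> B)"

lemma proj_closed_Yset: "proj_closed (Yset m R)"
  by (simp add: proj_closed_def Yset_iff)

lemma split_last_eq:
  "split_last a w =
     (rev (dropWhile (\<lambda>t. base t \<noteq> a) (rev w)), rev (takeWhile (\<lambda>t. base t \<noteq> a) (rev w)))"
proof -
  let ?P = "\<lambda>t. base t \<noteq> a"
  have w: "w = rev (dropWhile ?P (rev w)) @ rev (takeWhile ?P (rev w))"
    by (metis rev_append rev_rev_ident takeWhile_dropWhile_id)
  have "take (length w - length (rev (takeWhile ?P (rev w)))) w = rev (dropWhile ?P (rev w))"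
    by (subst (2) w, subst w) simp
  then show ?thesis by (simp add: split_last_def Let_def)
qed

lemma split_off_last_letters:
  "e \<le> length (proj_tilde a t) \<Longrightarrow>
    \<exists>u z. t = u @ z \<and> (u = [] \<or> base (last u) = a) \<and> length (proj_tilde a z) = e"
proof (induction t arbitrary: e rule: rev_induct)
  case Nil
  then show ?case by auto
next
  case (snoc x t)
  show ?case
  proof (cases "base x = a \<and> e = 0")
    case True
    then show ?thesis by (intro exI[of _ "t @ [x]"] exI[of _ "[]"]) auto
  next
    case False
    then have "e - (if base x = a then 1 else 0) \<le> length (proj_tilde a t)"
      using snoc.prems by auto
    then obtain u z where "t = u @ z" "u = [] \<or> base (last u) = a"
        "length (proj_tilde a z) = e - (if base x = a then 1 else 0)"
      using snoc.IH by blast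
    then show ?thesis using False by (intro exI[of _ u] exI[of _ "z @ [x]"]) auto
  qed
qed

lemma append_lang_replicate_iff:
  assumes "proj_closed B"
  shows "t \<in> append_lang B a {replicate e (U a)} \<longleftrightarrow>
    (\<exists>t0\<in>B. proj_tilde a t = proj_tilde a t0 @ replicate e (U a) \<and>
       (\<forall>b. b \<noteq> a \<longrightarrow> proj_tilde b t = proj_tilde b t0))"
proof
  let ?P = "\<lambda>t. base t \<noteq> a"
  assume "t \<in> append_lang B a {replicate e (U a)}"
  then obtain w z where w: "w \<in> B" and t: "t = fst (split_last a w) @ z"
    and z: "z \<in> shuffles (snd (split_last a w)) (replicate e (U a))"
    by (auto simp: append_lang_def)
  let ?u = "rev (dropWhile ?P (rev w))" and ?v = "rev (takeWhile ?P (rev w))"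
  have w_split: "w = ?u @ ?v"
    by (metis rev_append rev_rev_ident takeWhile_dropWhile_id)
  have "proj_tilde a ?v = []"
    by (auto simp: proj_tilde_def filter_empty_conv dest: set_takeWhileD)
  moreover have "proj_tilde b (replicate e (U a)) = (if b = a then replicate e (U a) else [])" for b
    by (induction e) auto
  ultimately have "proj_tilde b z = (if b = a then replicate e (U a) else proj_tilde b ?v)" for b
    using proj_tilde_shuffles[OF z, of b] by (auto simp: split_last_eq)
  then show "\<exists>t0\<in>B. proj_tilde a t = proj_tilde a t0 @ replicate e (U a) \<and>
       (\<forall>b. b \<noteq> a \<longrightarrow> proj_tilde b t = proj_tilde b t0)"
  proof (intro bexI[OF _ w] conjI allI impI)
    have t_split: "t = ?u @ z"
      using t by (simp add: split_last_eq)
    have w_proj: "proj_tilde b w = proj_tilde b ?u @ proj_tilde b ?v" for b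
      using arg_cong[OF w_split, of "proj_tilde b"] by simp
    show "proj_tilde a t = proj_tilde a w @ replicate e (U a)"
      using w_proj[of a] \<open>proj_tilde a ?v = []\<close> \<open>\<And>b. proj_tilde b z = _\<close>[of a] by (simp add: t_split)
    show "proj_tilde b t = proj_tilde b w" if "b \<noteq> a" for b
      using w_proj[of b] \<open>\<And>b. proj_tilde b z = _\<close>[of b] that by (simp add: t_split)
  qed
next
  let ?P = "\<lambda>t. base t \<noteq> a"
  assume "\<exists>t0\<in>B. proj_tilde a t = proj_tilde a t0 @ replicate e (U a) \<and>
       (\<forall>b. b \<noteq> a \<longrightarrow> proj_tilde b t = proj_tilde b t0)"
  then obtain t0 where t0: "t0 \<in> B" and ta: "proj_tilde a t = proj_tilde a t0 @ replicate e (U a)"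
    and tb: "\<forall>b. b \<noteq> a \<longrightarrow> proj_tilde b t = proj_tilde b t0"
    by blast
  obtain u z where t: "t = u @ z" and u: "u = [] \<or> base (last u) = a"
    and z: "length (proj_tilde a z) = e"
    using split_off_last_letters[of e a t] ta by auto
  have za: "proj_tilde a z = replicate e (U a)" and ua: "proj_tilde a u = proj_tilde a t0"
    using ta z unfolding t by (auto simp: append_eq_append_conv)
  let ?v = "filter ?P z"
  have "takeWhile ?P (rev u) = [] \<and> dropWhile ?P (rev u) = rev u"
    using u by (cases u rule: rev_cases) auto
  moreover have "takeWhile ?P (rev ?v @ rev u) = rev ?v @ takeWhile ?P (rev u)"
    by (rule takeWhile_append2) auto
  moreover have "dropWhile ?P (rev ?v @ rev u) = dropWhile ?P (rev u)"
    by (rule dropWhile_append2) auto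
  ultimately have "split_last a (u @ ?v) = (u, ?v)"
    by (simp add: split_last_eq)
  moreover have "u @ ?v \<in> B"
  proof -
    have "proj_tilde b (u @ ?v) = proj_tilde b t0" for b
      using ua tb unfolding t by (auto simp: proj_tilde_filter_other)
    then show ?thesis using assms t0 unfolding proj_closed_def by blast
  qed
  moreover have "z \<in> shuffles ?v (replicate e (U a))"
    using partition_in_shuffles[of z ?P] za by (simp add: proj_tilde_def shuffles_commutes)
  ultimately show "t \<in> append_lang B a {replicate e (U a)}"
    unfolding append_lang_def using t by force
qed

lemma foldl_append_lang_iff:
  fixes B :: "('a::enum) tl list set"
  assumes "distinct as" and "proj_closed B"
  shows "s \<in> foldl (\<lambda>B' a. append_lang B' a {map U (filter (\<lambda>b. b = a) f)}) B as \<longleftrightarrow>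
    (\<exists>t0\<in>B. \<forall>a. proj_tilde a s =
       proj_tilde a t0 @ (if a \<in> set as then replicate (count_list f a) (U a) else []))"
  using assms(1)
proof (induction as arbitrary: s rule: rev_induct)
  case Nil
  then show ?case using assms(2) by (auto simp: proj_closed_def)
next
  case (snoc b as)
  let ?F = "foldl (\<lambda>B' a. append_lang B' a {map U (filter (\<lambda>b. b = a) f)}) B as"
  let ?e = "\<lambda>as a. if a \<in> set as then replicate (count_list f a) (U a) else []"
  have b: "b \<notin> set as" and IH: "\<And>s. s \<in> ?F \<longleftrightarrow> (\<exists>t0\<in>B. \<forall>a. proj_tilde a s = proj_tilde a t0 @ ?e as a)"
    using snoc by auto
  have "proj_closed ?F"
    unfolding proj_closed_def IH by metis
  then have step: "s \<in> foldl (\<lambda>B' a. append_lang B' a {map U (filter (\<lambda>b. b = a) f)}) B (as @ [b]) \<longleftrightarrow>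
    (\<exists>t1\<in>?F. proj_tilde b s = proj_tilde b t1 @ replicate (count_list f b) (U b) \<and>
       (\<forall>c. c \<noteq> b \<longrightarrow> proj_tilde c s = proj_tilde c t1))"
    by (simp add: map_U_filter_eq append_lang_replicate_iff)
  show ?case
  proof
    assume "s \<in> foldl (\<lambda>B' a. append_lang B' a {map U (filter (\<lambda>b. b = a) f)}) B (as @ [b])"
    then obtain t1 t0 where "t0 \<in> B" "\<forall>a. proj_tilde a t1 = proj_tilde a t0 @ ?e as a"
      "proj_tilde b s = proj_tilde b t1 @ replicate (count_list f b) (U b)"
      "\<forall>c. c \<noteq> b \<longrightarrow> proj_tilde c s = proj_tilde c t1"
      using step IH by blast
    then show "\<exists>t0\<in>B. \<forall>a. proj_tilde a s = proj_tilde a t0 @ ?e (as @ [b]) a"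
      using b by (intro bexI[of _ t0]) auto
  next
    assume "\<exists>t0\<in>B. \<forall>a. proj_tilde a s = proj_tilde a t0 @ ?e (as @ [b]) a"
    then obtain t0 where t0: "t0 \<in> B" and s: "\<forall>a. proj_tilde a s = proj_tilde a t0 @ ?e (as @ [b]) a"
      by blast
    have "\<exists>t1. \<forall>a. proj_tilde a t1 = (if a = b then proj_tilde b t0 else proj_tilde a s)"
      by (rule exists_word_with_projections) (simp add: proj_tilde_in_lists)
    then obtain t1 where t1: "\<forall>a. proj_tilde a t1 = (if a = b then proj_tilde b t0 else proj_tilde a s)"
      by blast
    have "t1 \<in> ?F"
      using t0 s t1 b by (subst IH) (auto intro!: bexI[of _ t0])
    then show "s \<in> foldl (\<lambda>B' a. append_lang B' a {map U (filter (\<lambda>b. b = a) f)}) B (as @ [b])"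
      unfolding step using s t1 b by (intro bexI[of _ t1]) auto
  qed
qed

lemma append_comm_iff:
  assumes "proj_closed B"
  shows "s \<in> append_comm B F \<longleftrightarrow>
    (\<exists>f\<in>F. \<exists>y\<in>B. \<forall>a. proj_tilde a s = proj_tilde a y @ replicate (count_list f a) (U a))"
  unfolding append_comm_def using foldl_append_lang_iff[OF enum_distinct assms]
  by (simp add: enum_UNIV)

definition dot_if :: "'a \<Rightarrow> bool \<Rightarrow> 'a tl" where
  "dot_if a b = (if b then Dt a else U a)"

definition block_mask :: "nat \<Rightarrow> nat \<Rightarrow> bool list" where
  "block_mask m r = [True] @ replicate (r - 1) False @ [True] @ replicate (m - r - 1) False"

lemma Rm_singleton: "Rm m {r} a = {map (dot_if a) (block_mask m r)}"
  by (simp add: Rm_def block_mask_def dot_if_def)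

lemma length_block_mask: "1 \<le> r \<Longrightarrow> r < m \<Longrightarrow> length (block_mask m r) = m"
  by (simp add: block_mask_def)

lemma count_block_mask: "count_list (block_mask m r) True = 2"
  by (simp add: block_mask_def count_list_append count_list_replicate)

lemma nth_last_block_mask: "1 \<le> r \<Longrightarrow> r + 1 < m \<Longrightarrow> block_mask m r ! (m - 1) = False"
  by (auto simp: block_mask_def nth_append)

lemma length_concat_block_masks:
  "1 \<le> r \<Longrightarrow> r < m \<Longrightarrow> length (concat (replicate k (block_mask m r))) = m * k"
  by (simp add: length_concat sum_list_replicate length_block_mask)

definition scaffold_mask :: "nat \<Rightarrow> nat \<Rightarrow> nat \<Rightarrow> nat \<Rightarrow> bool list" where
  "scaffold_mask m r k e = concat (replicate k (block_mask m r)) @ replicate e False"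

lemma length_scaffold_mask: "1 \<le> r \<Longrightarrow> r < m \<Longrightarrow> length (scaffold_mask m r k e) = m * k + e"
  by (simp add: scaffold_mask_def length_concat_block_masks)

lemma count_scaffold_mask: "count_list (scaffold_mask m r k e) True = 2 * k"
  by (simp add: scaffold_mask_def count_list_append count_list_concat_replicate count_block_mask
      count_list_replicate)

lemma pivot_scaffold_mask:
  assumes "1 \<le> r" "r + 1 < m" "scaffold_mask m r k e \<noteq> []"
  shows "scaffold_mask m r k e ! min (m - 1) (length (scaffold_mask m r k e) - 1) = False"
proof (cases k)
  case 0
  with assms(3) show ?thesis by (simp add: scaffold_mask_def)
next
  case (Suc k')
  then have "scaffold_mask m r k e = block_mask m r @ scaffold_mask m r k' e"
    by (simp add: scaffold_mask_def)
  with assms show ?thesis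
    using nth_last_block_mask[OF assms(1,2)]
      by (simp add: length_scaffold_mask nth_append length_block_mask)
qed

lemma count_U_map_dot_if: "count_list (map (dot_if a) xs) (U a) = count_list xs False"
  by (induction xs) (auto simp: dot_if_def)

lemma count_False_plus_count_True: "count_list xs False + count_list xs True = length xs"
  by (induction xs) auto

lemma map_dot_if_scaffold_mask:
  "map (dot_if a) (scaffold_mask m r k e) =
     concat (replicate k (map (dot_if a) (block_mask m r))) @ replicate e (U a)"
  by (simp add: scaffold_mask_def map_concat dot_if_def)

lemma append_comm_Yset_iff:
  fixes F :: "('a::enum) list set"
  shows "s \<in> append_comm (Yset m {r}) F \<longleftrightarrow>
    (\<exists>f\<in>F. \<exists>k. \<forall>a. proj_tilde a s = map (dot_if a) (scaffold_mask m r (k a) (count_list f a)))"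
proof -
  have Y: "y \<in> Yset m {r} \<longleftrightarrow>
      (\<exists>k. \<forall>a. proj_tilde a y = concat (replicate (k a) (map (dot_if a) (block_mask m r))))" for y
    unfolding Yset_iff Rm_singleton kstar_singleton image_iff by (simp add: choice_iff)
  have blocks_exist:
    "\<exists>y. \<forall>a. proj_tilde a y = concat (replicate (k a) (map (dot_if a) (block_mask m r)))"
    for k :: "'a \<Rightarrow> nat"
  proof (rule exists_word_with_projections)
    show "concat (replicate (k a) (map (dot_if a) (block_mask m r))) \<in> lists {t. base t = a}" for a
      by (auto simp: dot_if_def set_replicate_conv_if split: if_splits)
  qed
  show ?thesis
    unfolding append_comm_iff[OF proj_closed_Yset] map_dot_if_scaffold_mask
  proof
    assume "\<exists>f\<in>F. \<exists>y\<in>Yset m {r}. \<forall>a. proj_tilde a s = proj_tilde a y @ replicate (count_list f a) (U a)"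
    then obtain f y k where "f \<in> F"
      "\<forall>a. proj_tilde a y = concat (replicate (k a) (map (dot_if a) (block_mask m r)))"
      "\<forall>a. proj_tilde a s = proj_tilde a y @ replicate (count_list f a) (U a)"
      using Y by blast
    then show "\<exists>f\<in>F. \<exists>k. \<forall>a. proj_tilde a s =
        concat (replicate (k a) (map (dot_if a) (block_mask m r))) @ replicate (count_list f a) (U a)"
      by auto
  next
    assume "\<exists>f\<in>F. \<exists>k. \<forall>a. proj_tilde a s =
        concat (replicate (k a) (map (dot_if a) (block_mask m r))) @ replicate (count_list f a) (U a)"
    then obtain f k where f: "f \<in> F" and s: "\<forall>a. proj_tilde a s =
        concat (replicate (k a) (map (dot_if a) (block_mask m r))) @ replicate (count_list f a) (U a)"
      by blast
    obtain y where y: "\<forall>a. proj_tilde a y = concat (replicate (k a) (map (dot_if a) (block_mask m r)))"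
      using blocks_exist by blast
    then have "y \<in> Yset m {r}"
      using Y by blast
    with f s y show "\<exists>f\<in>F. \<exists>y\<in>Yset m {r}.
        \<forall>a. proj_tilde a s = proj_tilde a y @ replicate (count_list f a) (U a)"
      by (intro bexI[OF _ f] bexI[of _ y]) simp_all
  qed
qed

section \<open>An invariant of the match closure\<close>

lemma min_pred_length_less: "xs \<noteq> [] \<Longrightarrow> min k (length xs - 1) < length xs"
  by (cases xs) auto

definition fill_like :: "('a \<Rightarrow> nat) set \<Rightarrow> 'a tl list \<Rightarrow> bool" where
  "fill_like P z \<longleftrightarrow>
     z \<noteq> [] \<and> (\<exists>b. last z = Dt b) \<and> (\<exists>n. \<forall>a. count_list z (U a) = (\<Sum>p\<in>P. n p * p a))"

text \<open>
  The pivot of an a-projection is its m-th letter, i.e.\ the last letter of a leading block, or its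
  last letter if it is shorter.
\<close>
definition pivot_undotted :: "nat \<Rightarrow> 'a tl list \<Rightarrow> bool" where
  "pivot_undotted m z \<longleftrightarrow>
     (\<forall>a. proj_tilde a z \<noteq> [] \<longrightarrow> proj_tilde a z ! min (m - 1) (length (proj_tilde a z) - 1) = U a)"

text \<open>
  In a word of Y \<lhd> W the a-projection consists of k_a blocks, each of length m with two dots, and a
  tail of length c_a + \<Sum> h_p p_a; matching with fill words undots further letters, by a combination
  \<Sum> n_p p_a of periods.
\<close>
definition scaffold_like :: "('a \<Rightarrow> nat) \<Rightarrow> ('a \<Rightarrow> nat) set \<Rightarrow> nat \<Rightarrow> 'a tl list \<Rightarrow> bool" where
  "scaffold_like c P m z \<longleftrightarrow> pivot_undotted m z \<and>
     (\<exists>k h n. \<forall>a. length (proj_tilde a z) = m * k a + c a + (\<Sum>p\<in>P. h p * p a) \<and>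
        count_list z (U a) + 2 * k a = length (proj_tilde a z) + (\<Sum>p\<in>P. n p * p a))"

lemma fill_like_wmatch:
  assumes "fill_like P x" "fill_like P y" "wmatch x y = Some z"
  shows "fill_like P z"
proof -
  obtain n n' where n: "\<forall>a. count_list x (U a) = (\<Sum>p\<in>P. n p * p a)"
    and n': "\<forall>a. count_list y (U a) = (\<Sum>p\<in>P. n' p * p a)"
    using assms(1,2) by (auto simp: fill_like_def)
  obtain b b' where "x \<noteq> []" "last x = Dt b" "last y = Dt b'"
    using assms(1,2) by (auto simp: fill_like_def)
  then have "z \<noteq> []" "last z = Dt b"
    using wmatch_nth(2)[OF assms(3)] wmatch_last[OF assms(3)] by (auto split: if_splits)
  moreover have "\<forall>a. count_list z (U a) = (\<Sum>p\<in>P. (n p + n' p) * p a)"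
    using n n' wmatch_count_U[OF assms(3)] by (simp add: distrib_right sum.distrib)
  ultimately show ?thesis
    unfolding fill_like_def by (intro conjI exI[of _ b] exI[of _ "\<lambda>p. n p + n' p"])
qed

lemma pivot_undotted_wmatch:
  assumes "pivot_undotted m y" "wmatch x y = Some z"
  shows "pivot_undotted m z"
  unfolding pivot_undotted_def
proof (intro allI impI)
  fix a
  assume "proj_tilde a z \<noteq> []"
  note proj_match = wmatch_proj_tilde[OF assms(2), of a]
  let ?j = "min (m - 1) (length (proj_tilde a z) - 1)"
  have len: "length (proj_tilde a y) = length (proj_tilde a z)"
    using wmatch_nth[OF proj_match] by simp
  have "?j < length (proj_tilde a y)"
    using min_pred_length_less[OF \<open>proj_tilde a z \<noteq> []\<close>] len by simp
  moreover have "proj_tilde a y ! ?j = U a"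
    using assms(1) \<open>proj_tilde a z \<noteq> []\<close> unfolding pivot_undotted_def by (metis len length_0_conv)
  ultimately show "proj_tilde a z ! ?j = U a"
    by (rule wmatch_keeps_U[OF proj_match])
qed

lemma pivot_undotted_wmatch_Nil:
  assumes "pivot_undotted m x" "pivot_undotted m y" "wmatch x y = Some z"
  shows "x = []"
proof (rule proj_tilde_all_Nil, rule ccontr)
  fix a
  assume ne: "proj_tilde a x \<noteq> []"
  note proj_match = wmatch_proj_tilde[OF assms(3), of a]
  let ?j = "min (m - 1) (length (proj_tilde a x) - 1)"
  have len: "length (proj_tilde a y) = length (proj_tilde a x)"
    using wmatch_nth[OF proj_match] by simp
  have "proj_tilde a x ! ?j = U a"
    using assms(1) ne by (simp add: pivot_undotted_def)
  moreover have "proj_tilde a y ! ?j = U a"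
    using assms(2) ne unfolding pivot_undotted_def by (metis len length_0_conv)
  moreover have "?j < length (proj_tilde a x)"
    using ne by (rule min_pred_length_less)
  ultimately show False
    using wmatch_nth(3)[OF proj_match] by fastforce
qed

lemma scaffold_like_wmatch:
  assumes "fill_like P x" "scaffold_like c P m y" "wmatch x y = Some z"
  shows "scaffold_like c P m z"
proof -
  obtain n where n: "\<forall>a. count_list x (U a) = (\<Sum>p\<in>P. n p * p a)"
    using assms(1) by (auto simp: fill_like_def)
  obtain k h n' where
    len: "\<forall>a. length (proj_tilde a y) = m * k a + c a + (\<Sum>p\<in>P. h p * p a)" and
    cnt: "\<forall>a. count_list y (U a) + 2 * k a = length (proj_tilde a y) + (\<Sum>p\<in>P. n' p * p a)"
    using assms(2) unfolding scaffold_like_def by blast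
  have len_z: "length (proj_tilde a z) = length (proj_tilde a y)" for a
    using wmatch_nth[OF wmatch_proj_tilde[OF assms(3)]] by simp
  have "\<forall>a. length (proj_tilde a z) = m * k a + c a + (\<Sum>p\<in>P. h p * p a) \<and>
      count_list z (U a) + 2 * k a = length (proj_tilde a z) + (\<Sum>p\<in>P. (n p + n' p) * p a)"
    using len cnt n wmatch_count_U[OF assms(3)] by (simp add: len_z distrib_right sum.distrib)
  moreover have "pivot_undotted m z"
    using pivot_undotted_wmatch assms(2,3) by (auto simp: scaffold_like_def)
  ultimately show ?thesis
    unfolding scaffold_like_def by (intro conjI exI[of _ k] exI[of _ h] exI[of _ "\<lambda>p. n p + n' p"])
qed

lemma fill_or_scaffold_like_wmatch:
  assumes x: "fill_like P x \<or> scaffold_like c P m x" and y: "fill_like P y \<or> scaffold_like c P m y"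
    and z: "wmatch x y = Some z"
  shows "fill_like P z \<or> scaffold_like c P m z"
  using x y
proof (elim disjE)
  assume "scaffold_like c P m x" "scaffold_like c P m y"
  then have "x = []"
    using pivot_undotted_wmatch_Nil z by (auto simp: scaffold_like_def)
  then show ?thesis
    using x z wmatch_nth(2)[OF z] by simp
next
  assume "scaffold_like c P m x" "fill_like P y"
  then show ?thesis
    using scaffold_like_wmatch z wmatch_commute by metis
qed (use fill_like_wmatch scaffold_like_wmatch z in blast)+

lemma last_sc_undotted:
  assumes "\<forall>r\<in>R. r + 1 < m" "s \<in> sc m R" "s \<noteq> []"
  shows "\<exists>b. last s = U b"
proof -
  let ?b = "base (last s)"
  have "last (proj_tilde ?b s) = last s" "proj_tilde ?b s \<noteq> []"
    using assms(3) by (induction s rule: rev_induct) auto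
  moreover have "proj_tilde ?b s \<in> kstar (Rm m R ?b \<union> {[U ?b]})"
    using assms(2) by (simp add: sc_def)
  moreover have "last v = U ?b" if "v \<in> Rm m R ?b \<union> {[U ?b]}" for v
    using that assms(1) by (auto simp: Rm_def last_append)
  ultimately show ?thesis
    using kstar_last by metis
qed

lemma fill_like_Xset:
  assumes "\<forall>r\<in>R. r + 1 < m" "finite P" "x \<in> Xset c P m R"
  shows "fill_like P x"
proof -
  obtain p s where p: "p \<in> P" "parikh (proj_undotted x) = p" and s: "s \<in> sc m R"
    and x: "x = map switch1 s" "x \<notin> lists (range Dt)"
    using assms(3) by (auto simp: Xset_def fl_def switch_def)
  have "s \<noteq> []"
    using x by auto
  then obtain b where "last s = U b"
    using last_sc_undotted[OF assms(1) s] by blast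
  then have "last x = Dt b"
    using \<open>s \<noteq> []\<close> x(1) by (simp add: last_map)
  moreover have "count_list x (U a) = (\<Sum>q\<in>P. (if q = p then 1 else 0) * q a)" for a
  proof -
    have "count_list x (U a) = p a"
      using p(2) by (metis parikh_def count_proj_undotted)
    then show ?thesis
      using p(1) assms(2) by (simp add: if_distrib[where f="\<lambda>x. x * _"] sum.delta' cong: if_cong)
  qed
  ultimately show ?thesis
    using \<open>s \<noteq> []\<close> x(1) unfolding fill_like_def
    by (intro conjI exI[of _ b] exI[of _ "\<lambda>q. if q = p then 1 else 0"]) auto
qed

lemma scaffold_like_append_comm_Yset:
  assumes "1 \<le> r" "r + 1 < m" "s \<in> append_comm (Yset m {r}) (Wlang c P m)"
  shows "scaffold_like c P m s"
proof -
  obtain f k where f: "f \<in> Wlang c P m"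
    and s: "\<forall>a. proj_tilde a s = map (dot_if a) (scaffold_mask m r (k a) (count_list f a))"
    using assms(3) by (auto simp: append_comm_Yset_iff)
  obtain h where h: "count_list f a = c a + (\<Sum>p\<in>P. h p * p a)" for a
    using f by (auto simp: Wlang_def parikh_def dest: fun_cong)
  have "pivot_undotted m s"
    unfolding pivot_undotted_def s[rule_format]
  proof (intro allI impI)
    fix a
    let ?xs = "scaffold_mask m r (k a) (count_list f a)"
    assume "map (dot_if a) ?xs \<noteq> []"
    then have "\<not> ?xs ! min (m - 1) (length ?xs - 1)" "min (m - 1) (length ?xs - 1) < length ?xs"
      using pivot_scaffold_mask[OF assms(1,2)] min_pred_length_less by auto
    then show "map (dot_if a) ?xs ! min (m - 1) (length (map (dot_if a) ?xs) - 1) = U a"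
      by (simp add: dot_if_def)
  qed
  moreover have "length (proj_tilde a s) = m * k a + c a + (\<Sum>p\<in>P. h p * p a)" for a
    using assms(1,2) by (simp add: s h length_scaffold_mask)
  moreover have "count_list s (U a) + 2 * k a = length (proj_tilde a s) + (\<Sum>p\<in>P. 0 * p a)" for a
  proof -
    let ?xs = "scaffold_mask m r (k a) (count_list f a)"
    have "count_list s (U a) = count_list ?xs False"
      using count_U_proj_tilde[of a s] by (simp add: s count_U_map_dot_if)
    then show ?thesis
      using count_False_plus_count_True[of ?xs] by (simp add: s count_scaffold_mask)
  qed
  ultimately show ?thesis
    unfolding scaffold_like_def by (intro conjI exI[of _ k] exI[of _ h] exI[of _ "\<lambda>_. 0"]) auto
qed

lemma parikh_in_linset_if_scaffold_like:
  assumes "even m" "scaffold_like c P m (map U w)"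
  shows "parikh w \<in> linset c P"
proof -
  have proj: "proj_tilde a (map U w) = map U (filter (\<lambda>b. b = a) w)" for a
    by (induction w) auto
  have cnt: "count_list (map U w) (U a) = count_list w a" for a
    by (induction w) auto
  obtain k h n where
    len: "\<forall>a. count_list w a = m * k a + c a + (\<Sum>p\<in>P. h p * p a)" and
    undotted: "\<forall>a. count_list w a + 2 * k a = count_list w a + (\<Sum>p\<in>P. n p * p a)"
    using assms(2) unfolding scaffold_like_def proj map_U_filter_eq cnt by auto
  have "count_list w a = c a + (\<Sum>p\<in>P. (h p + m div 2 * n p) * p a)" for a
  proof -
    have "m * k a = m div 2 * (\<Sum>p\<in>P. n p * p a)"
      using undotted assms(1) by (metis add_left_cancel dvd_mult_div_cancel mult.assoc mult.left_commute)
    then show ?thesis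
      using len by (simp add: algebra_simps sum.distrib sum_distrib_left)
  qed
  then have "parikh w = (\<lambda>a. c a + (\<Sum>p\<in>P. (h p + m div 2 * n p) * p a))"
    by (auto simp: parikh_def)
  then show ?thesis
    unfolding linset_def by (intro CollectI exI[of _ "\<lambda>p. h p + m div 2 * n p"])
qed

lemma parikh_in_linset_if_in_C_Dset:
  assumes "1 \<le> r" "r + 1 < m" "even m" "finite P" "w \<in> C (Dset c P m {r})"
  shows "parikh w \<in> linset c P"
proof -
  have "map U w \<in> match_closure (Dset c P m {r})"
    using assms(5) by (simp add: C_def)
  then have "fill_like P (map U w) \<or> scaffold_like c P m (map U w)"
  proof (induction rule: match_closure.induct)
    case (mc_base x)
    then show ?case
      using fill_like_Xset[of "{r}" m P x c] scaffold_like_append_comm_Yset[OF assms(1,2), of x c P]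
        assms(2,4)
      by (auto simp: Dset_def)
  next
    case (mc_step x y z)
    then show ?case by (intro fill_or_scaffold_like_wmatch[OF mc_step.IH mc_step.hyps(3)])
  qed
  moreover have "\<not> fill_like P (map U w)"
    by (auto simp: fill_like_def last_map)
  ultimately show ?thesis
    using parikh_in_linset_if_scaffold_like[OF assms(3)] by blast
qed

section \<open>Undotting the scaffold\<close>

text \<open>\<open>masked M w\<close> is w with its i-th occurrence of a dotted iff \<open>M a ! i\<close>.\<close>
fun masked :: "('a \<Rightarrow> bool list) \<Rightarrow> 'a list \<Rightarrow> 'a tl list" where
  "masked M [] = []"
| "masked M (a # w) = dot_if a (hd (M a)) # masked (M(a := tl (M a))) w"

lemma masked_length_Cons:
  assumes "\<forall>b. length (M b) = count_list (a # w) b"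
  obtains x xs where "M a = x # xs" "\<forall>b. length ((M(a := tl (M a))) b) = count_list w b"
proof -
  have "length (M a) = Suc (count_list w a)"
    using assms by simp
  then obtain x xs where "M a = x # xs"
    by (cases "M a") auto
  moreover have "\<forall>b. length ((M(a := tl (M a))) b) = count_list w b"
    using assms \<open>length (M a) = Suc (count_list w a)\<close> by auto
  ultimately show thesis
    using that by blast
qed

lemma proj_tilde_masked:
  "\<forall>b. length (M b) = count_list w b \<Longrightarrow> proj_tilde a (masked M w) = map (dot_if a) (M a)"
proof (induction w arbitrary: M)
  case Nil
  then show ?case by auto
next
  case (Cons x w)
  then show ?case
    by (elim masked_length_Cons) (auto simp: dot_if_def)
qed

lemma masked_replicate_False: "masked (\<lambda>a. replicate (count_list w a) False) w = map U w"
proof (induction w)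
  case (Cons x w)
  have "(\<lambda>a. replicate (count_list (x # w) a) False)(x := tl (replicate (count_list (x # w) x) False)) =
      (\<lambda>a. replicate (count_list w a) False)"
    by auto
  then show ?case
    using Cons by (simp add: dot_if_def)
qed simp

lemma map_switch1_masked:
  "\<forall>b. length (M b) = count_list w b \<Longrightarrow> map switch1 (masked M w) = masked (\<lambda>a. map Not (M a)) w"
proof (induction w arbitrary: M)
  case (Cons x w)
  from Cons.prems obtain y ys where "M x = y # ys" "\<forall>b. length ((M(x := tl (M x))) b) = count_list w b"
    by (rule masked_length_Cons)
  moreover have "(\<lambda>a. map Not ((M(x := tl (M x))) a)) = (\<lambda>a. map Not (M a))(x := tl (map Not (M x)))"
    by (auto simp: map_tl)
  ultimately show ?case
    using Cons.IH by (simp add: dot_if_def)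
qed simp

lemma wmatch_masked:
  "\<forall>b. list_all2 (\<or>) (M1 b) (M2 b) \<and> length (M1 b) = count_list w b \<Longrightarrow>
    wmatch (masked M1 w) (masked M2 w) = Some (masked (\<lambda>b. map2 (\<and>) (M1 b) (M2 b)) w)"
proof (induction w arbitrary: M1 M2)
  case (Cons x w)
  obtain y ys y' ys' where M: "M1 x = y # ys" "M2 x = y' # ys'"
    using Cons.prems by (cases "M1 x"; cases "M2 x") (auto dest: spec[of _ x])
  then have "y \<or> y'"
    using Cons.prems by (auto dest: spec[of _ x])
  moreover have "\<forall>b. list_all2 (\<or>) ((M1(x := tl (M1 x))) b) ((M2(x := tl (M2 x))) b) \<and>
      length ((M1(x := tl (M1 x))) b) = count_list w b"
    using Cons.prems M by (auto dest: spec[of _ x])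
  moreover have "(\<lambda>b. map2 (\<and>) ((M1(x := tl (M1 x))) b) ((M2(x := tl (M2 x))) b)) =
      (\<lambda>b. map2 (\<and>) (M1 b) (M2 b))(x := tl (map2 (\<and>) (M1 x) (M2 x)))"
    using M by auto
  ultimately show ?case
    using Cons.IH M by (auto simp: dot_if_def)
qed simp

lemma masked_Not_in_Xset:
  assumes "p \<in> P" "\<exists>a. p a \<noteq> 0"
    and len: "\<forall>a. length (M a) = count_list w a"
    and blocks: "\<forall>a. M a \<in> kstar {block_mask m r, [False]}"
    and dots: "\<forall>a. count_list (M a) True = p a"
  shows "masked (\<lambda>a. map Not (M a)) w \<in> Xset c P m {r}"
proof -
  let ?x = "masked (\<lambda>a. map Not (M a)) w"
  have proj: "proj_tilde a ?x = map (dot_if a) (map Not (M a))" for a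
    using len by (simp add: proj_tilde_masked)
  have "map (dot_if a) (M a) \<in> kstar (Rm m {r} a \<union> {[U a]})" for a
    using kstar_map[OF blocks[rule_format, of a], of "dot_if a"]
      by (simp add: Rm_singleton dot_if_def insert_commute)
  then have "masked M w \<in> sc m {r}"
    using len by (simp add: sc_def proj_tilde_masked)
  then have "?x \<in> switch (sc m {r})"
    using map_switch1_masked[OF len] unfolding switch_def by (metis image_eqI)
  moreover obtain a where "p a \<noteq> 0"
    using assms(2) by blast
  then have "True \<in> set (M a)"
    using dots by (metis count_list_0_iff)
  then have "U a \<in> set (proj_tilde a ?x)"
    unfolding proj by (force simp: dot_if_def)
  then have "?x \<notin> lists (range Dt)"
    by (auto simp: proj_tilde_def)
  moreover have "parikh (proj_undotted ?x) = p"
  proof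
    fix b
    have "count_list (map Not xs) False = count_list xs True" for xs
      by (induction xs) auto
    then have "count_list (map (dot_if b) (map Not (M b))) (U b) = count_list (M b) True"
      by (simp only: count_U_map_dot_if)
    then show "parikh (proj_undotted ?x) b = p b"
      using dots proj[of b] count_U_proj_tilde[of b ?x]
      by (simp add: parikh_def count_proj_undotted)
  qed
  ultimately show ?thesis
    using assms(1) by (auto simp: Xset_def fl_def)
qed

lemma map2_conj_Not: "map2 (\<and>) xs (map Not xs) = replicate (length xs) False"
  by (induction xs) auto

lemma list_all2_disj_Not: "list_all2 (\<or>) xs (map Not xs)"
  by (induction xs) auto

lemma map2_conj_True: "map2 (\<and>) xs (replicate (length xs) True) = xs"
  by (induction xs) auto

lemma list_all2_disj_True: "list_all2 (\<or>) xs (replicate (length xs) True)"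
  by (induction xs) auto

lemma undot_blocks_step:
  assumes r: "1 \<le> r" "r + 1 < m" and p: "p \<in> P" "\<forall>a. even (p a)" "\<exists>a. p a \<noteq> 0"
    and len: "\<forall>a. k a + m * (p a div 2) + length (v a) = count_list w a"
    and cur: "masked (\<lambda>a. replicate (k a) False @ concat (replicate (p a div 2) (block_mask m r)) @
      v a) w \<in> match_closure (Dset c P m {r})"
  shows "masked (\<lambda>a. replicate (k a + m * (p a div 2)) False @ v a) w \<in> match_closure (Dset c P m {r})"
proof -
  \<comment> \<open>The fill word is dotted everywhere except at the dots of the p_a/2 blocks to be undotted.\<close>
  let ?B = "\<lambda>a. concat (replicate (p a div 2) (block_mask m r))"
  let ?cur = "\<lambda>a. replicate (k a) False @ ?B a @ v a"
  let ?G = "\<lambda>a. replicate (k a) False @ ?B a @ replicate (length (v a)) False"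
  have lenB: "length (?B a) = m * (p a div 2)" for a
    using r by (simp add: length_concat_block_masks)
  have lenG: "\<forall>a. length (?G a) = count_list w a"
    using len lenB by (simp add: add.assoc)
  have "\<forall>a. ?G a \<in> kstar {block_mask m r, [False]}"
  proof
    fix a
    have "replicate n False = concat (replicate n [False])" for n
      by (induction n) auto
    then show "?G a \<in> kstar {block_mask m r, [False]}"
      by (metis kstar_append kstar_concat_replicate insertI1 insertI2 singletonI)
  qed
  moreover have "\<forall>a. count_list (?G a) True = p a"
    using p(2) by (simp add: count_list_append count_list_replicate count_list_concat_replicate
        count_block_mask)
  ultimately have "masked (\<lambda>a. map Not (?G a)) w \<in> Xset c P m {r}"
    using masked_Not_in_Xset[OF p(1,3) lenG] by blast
  then have fill: "masked (\<lambda>a. map Not (?G a)) w \<in> match_closure (Dset c P m {r})"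
    by (auto simp: Dset_def intro: mc_base)
  have "\<forall>a. list_all2 (\<or>) (?cur a) (map Not (?G a)) \<and> length (?cur a) = count_list w a"
    using len lenB list_all2_disj_True[of "replicate _ False"]
    by (auto simp: add.assoc intro!: list_all2_appendI list_all2_disj_Not list_all2_disj_True)
  moreover have
    "map2 (\<and>) (?cur a) (map Not (?G a)) = replicate (k a + m * (p a div 2)) False @ v a" for a
    using lenB[of a] by (simp add: map2_conj_Not map2_conj_True replicate_add)
  ultimately have "wmatch (masked ?cur w) (masked (\<lambda>a. map Not (?G a)) w) =
      Some (masked (\<lambda>a. replicate (k a + m * (p a div 2)) False @ v a) w)"
    by (simp add: wmatch_masked)
  with cur fill show ?thesis
    by (rule mc_step)
qed

definition half_total :: "('a \<Rightarrow> nat) list \<Rightarrow> 'a \<Rightarrow> nat" where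
  "half_total ps a = (\<Sum>p\<leftarrow>ps. p a div 2)"

lemma undot_blocks:
  assumes r: "1 \<le> r" "r + 1 < m" and P: "\<forall>p\<in>P. \<forall>a. even (p a)"
  shows "set ps \<subseteq> P \<Longrightarrow> \<forall>a. k a + m * half_total ps a + e a = count_list w a \<Longrightarrow>
    masked (\<lambda>a. replicate (k a) False @ scaffold_mask m r (half_total ps a) (e a)) w
      \<in> match_closure (Dset c P m {r}) \<Longrightarrow>
    map U w \<in> match_closure (Dset c P m {r})"
proof (induction ps arbitrary: k)
  case Nil
  then have "(\<lambda>a. replicate (k a) False @ scaffold_mask m r (half_total [] a) (e a)) =
      (\<lambda>a. replicate (count_list w a) False)"
    by (auto simp: half_total_def scaffold_mask_def replicate_add[symmetric])
  then show ?case
    using Nil.prems(3) by (simp add: masked_replicate_False)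
next
  case (Cons p ps)
  have half_total_Cons: "half_total (p # ps) a = p a div 2 + half_total ps a" for a
    by (simp add: half_total_def)
  show ?case
  proof (cases "\<exists>a. p a \<noteq> 0")
    case False
    then show ?thesis
      using Cons by (simp add: half_total_Cons)
  next
    case True
    let ?v = "\<lambda>a. scaffold_mask m r (half_total ps a) (e a)"
    have "masked (\<lambda>a. replicate (k a + m * (p a div 2)) False @ ?v a) w \<in> match_closure (Dset c P m {r})"
    proof (rule undot_blocks_step[OF r _ _ True])
      show "\<forall>a. k a + m * (p a div 2) + length (?v a) = count_list w a"
        using Cons.prems(2) r by (simp add: half_total_Cons length_scaffold_mask algebra_simps)
      show "masked (\<lambda>a. replicate (k a) False @ concat (replicate (p a div 2) (block_mask m r)) @ ?v a) w
          \<in> match_closure (Dset c P m {r})"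
        using Cons.prems(3) by (simp add: half_total_Cons scaffold_mask_def replicate_add)
    qed (use Cons.prems(1) P in auto)
    then show ?thesis
      using Cons.IH[of "\<lambda>a. k a + m * (p a div 2)"] Cons.prems(1,2)
        by (simp add: half_total_Cons algebra_simps)
  qed
qed

lemma half_total_replicate_periods:
  assumes "set xs = P" "distinct xs"
  shows "half_total (concat (map (\<lambda>p. replicate (g p) p) xs)) a = (\<Sum>p\<in>P. g p * (p a div 2))"
proof -
  have "half_total (concat (map (\<lambda>p. replicate (g p) p) xs)) a = (\<Sum>p\<leftarrow>xs. g p * (p a div 2))"
    by (induction xs) (auto simp: half_total_def sum_list_replicate)
  then show ?thesis
    using assms by (simp add: sum_list_distinct_conv_sum_set)
qed

lemma linset_count_decomposition:
  assumes "even m" "m > 0" "finite P" "\<forall>p\<in>P. \<forall>a. even (p a)" "parikh w \<in> linset c P"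
  obtains ps h where "set ps \<subseteq> P" "\<forall>p\<in>P. 2 * h p < m"
    "\<forall>a. count_list w a = m * half_total ps a + (c a + (\<Sum>p\<in>P. h p * p a))"
proof -
  obtain n where n: "count_list w a = c a + (\<Sum>p\<in>P. n p * p a)" for a
    using assms(5) by (auto simp: linset_def parikh_def dest: fun_cong)
  define d where "d = m div 2"
  have "d > 0" "m = 2 * d"
    using assms(1,2) by (auto simp: d_def)
  obtain xs where xs: "set xs = P" "distinct xs"
    using finite_distinct_list[OF assms(3)] by blast
  define ps where "ps = concat (map (\<lambda>p. replicate (n p div d) p) xs)"
  have "count_list w a = m * half_total ps a + (c a + (\<Sum>p\<in>P. (n p mod d) * p a))" for a
  proof -
    have "m * half_total ps a = (\<Sum>p\<in>P. d * (n p div d) * p a)"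
      unfolding ps_def half_total_replicate_periods[OF xs] sum_distrib_left
      using assms(4) \<open>m = 2 * d\<close> by (intro sum.cong) (auto elim!: evenE)
    moreover have "(\<Sum>p\<in>P. n p * p a) = (\<Sum>p\<in>P. (n p mod d) * p a + d * (n p div d) * p a)"
      by (intro sum.cong refl) (metis add_mult_distrib mod_mult_div_eq)
    ultimately show ?thesis
      by (simp add: n sum.distrib)
  qed
  moreover have "set ps \<subseteq> P"
    using xs by (auto simp: ps_def)
  moreover have "\<forall>p\<in>P. 2 * (n p mod d) < m"
    using \<open>d > 0\<close> \<open>m = 2 * d\<close> by simp
  ultimately show thesis
    using that[of ps "\<lambda>p. n p mod d"] by blast
qed

lemma in_C_Dset_if_parikh_in_linset:
  assumes r: "1 \<le> r" "r + 1 < m" and m: "even m" and P: "finite P" "\<forall>p\<in>P. \<forall>a. even (p a)"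
    and w: "parikh w \<in> linset c P"
  shows "w \<in> C (Dset c P m {r})"
proof -
  obtain ps h where ps: "set ps \<subseteq> P" and h: "\<forall>p\<in>P. 2 * h p < m"
    and counts: "\<forall>a. count_list w a = m * half_total ps a + (c a + (\<Sum>p\<in>P. h p * p a))"
    using linset_count_decomposition[OF m _ P w] r by auto
  obtain f where f: "\<forall>a. count_list f a = c a + (\<Sum>p\<in>P. h p * p a)"
    using exists_word_with_counts[of "\<lambda>a. c a + (\<Sum>p\<in>P. h p * p a)"] by blast
  have "f \<in> Wlang c P m"
    unfolding Wlang_def parikh_def using f h by auto
  moreover have "\<forall>a. length (scaffold_mask m r (half_total ps a) (count_list f a)) = count_list w a"
    using counts f r by (simp add: length_scaffold_mask)
  ultimately have "masked (\<lambda>a. scaffold_mask m r (half_total ps a) (count_list f a)) w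
      \<in> append_comm (Yset m {r}) (Wlang c P m)"
    unfolding append_comm_Yset_iff by (intro bexI[of _ f] exI[of _ "half_total ps"])
      (simp add: proj_tilde_masked)
  then have "masked (\<lambda>a. scaffold_mask m r (half_total ps a) (count_list f a)) w
      \<in> match_closure (Dset c P m {r})"
    by (auto simp: Dset_def intro: mc_base)
  then show ?thesis
    using undot_blocks[OF r P(2) ps, of "\<lambda>_. 0" "count_list f" w c] counts f by (simp add: C_def)
qed

lemma commutative_lang_mem_iff:
  "commutative_lang L \<Longrightarrow> parikh ` L = S \<Longrightarrow> w \<in> L \<longleftrightarrow> parikh w \<in> S"
  unfolding commutative_lang_def by (metis image_iff)

theorem theorem5:
  fixes L :: "('a::enum) list set" and c :: "'a \<Rightarrow> nat" and P :: "('a \<Rightarrow> nat) set"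
    and m r :: nat
  assumes "commutative_lang L"
    and "parikh ` L = linset c P"
    and "finite P" and "P \<noteq> {}"
    and "\<forall>p\<in>P. \<forall>a. even (p a)"
    and "even m" and "m \<ge> 4"
    and "1 \<le> r" and "r \<le> m div 2 - 1"
  shows "L = C (Dset c P m {r})"
proof (intro set_eqI)
  fix w
  have r: "r + 1 < m"
    using assms(7,9) by linarith
  have "w \<in> L \<longleftrightarrow> parikh w \<in> linset c P"
    using commutative_lang_mem_iff[OF assms(1,2)] .
  also have "\<dots> \<longleftrightarrow> w \<in> C (Dset c P m {r})"
    using in_C_Dset_if_parikh_in_linset[OF assms(8) r assms(6,3,5)]
      parikh_in_linset_if_in_C_Dset[OF assms(8) r assms(6,3)] by blast
  finally show "w \<in> L \<longleftrightarrow> w \<in> C (Dset c P m {r})" .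
qed

end
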